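(* Let $k\ge0$ and $m\ge0$ be integers and $a,b,c,d,w\in\mathbb{C}$ generic. (i) $${}_5F_4\!\left[\begin{matrix}\tfrac a2,\ \tfrac12+\tfrac a2,\ 1-k+a-b-c,\ 1+a-w,\ -m\\ 1+a-b,\ 1+a-c,\ \tfrac12+\tfrac12(a-w-m),\ 1+\tfrac12(a-w-m)\end{matrix}\,\Big|\,1\right]=\frac{(w)_m}{(w-a)_m}\sum_{n=0}^m\frac{(a)_n(b)_n(c)_n(-m)_n}{n!\,(1+a-b)_n(1+a-c)_n(w)_n}\,Q_k^{(2)}(n;a;b,c).$$ (ii) $${}_6F_5\!\left[\begin{matrix}\tfrac a2,\ \tfrac12+\tfrac a2,\ 1-k+a-b-c,\ k+d,\ 1+a-w,\ -m\\ 1+a-b,\ 1+a-c,\ d,\ \tfrac12+\tfrac12(a-w-m),\ 1+\tfrac12(a-w-m)\end{matrix}\,\Big|\,1\right]=\frac{(w)_m}{(w-a)_m}\sum_{n=0}^m\frac{(a)_n(b)_n(c)_n(-m)_n}{n!\,(1+a-b)_n(1+a-c)_n(w)_n}\,Q_k^{(2)}(n;a;b,c,d).$$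
   Context: $(c)_n$ denotes the Pochhammer symbol, $(c)_0=1$; ${}_pF_q(1)$ is the terminating generalized hypergeometric series at $1$. $Q_k^{(2)}(n;a;b,c)=\sum_{j=0}^k\frac{(-n)_j(n+a)_j(-k)_j}{j!(b)_j(c)_j}$ and $Q_k^{(2)}(n;a;b,c,d)=\sum_{j=0}^k\frac{(-n)_j(n+a)_j(-k)_j(k-1-a+b+c+d)_j}{j!(b)_j(c)_j(d)_j}$. Parameters are generic so no lower parameter is a nonpositive integer. *)

theory Defs
  imports "HOL-Analysis.Analysis" "HOL-Library.Nonpos_Ints"
begin

text \<open>Terminating generalized hypergeometric series at argument 1, summed up to index N
  (used with N = m when one upper parameter is -m, so all later terms vanish).\<close>
definition hypF :: "complex list \<Rightarrow> complex list \<Rightarrow> nat \<Rightarrow> complex" where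
  "hypF us ls N = (\<Sum>j=0..N. (\<Prod>u\<leftarrow>us. pochhammer u j) /
       ((\<Prod>l\<leftarrow>ls. pochhammer l j) * fact j))"

definition Q2 :: "nat \<Rightarrow> nat \<Rightarrow> complex \<Rightarrow> complex \<Rightarrow> complex \<Rightarrow> complex" where
  "Q2 k n a b c = (\<Sum>j=0..k. pochhammer (- of_nat n) j * pochhammer (of_nat n + a) j
       * pochhammer (- of_nat k) j / (fact j * pochhammer b j * pochhammer c j))"

definition Q2d :: "nat \<Rightarrow> nat \<Rightarrow> complex \<Rightarrow> complex \<Rightarrow> complex \<Rightarrow> complex \<Rightarrow> complex" where
  "Q2d k n a b c d = (\<Sum>j=0..k. pochhammer (- of_nat n) j * pochhammer (of_nat n + a) j
       * pochhammer (- of_nat k) j * pochhammer (of_nat k - 1 - a + b + c + d) j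
       / (fact j * pochhammer b j * pochhammer c j * pochhammer d j))"

end

theory Submission
  imports Defs
begin

(*
  For k = 0 part (i) is a quadratic transformation of a terminating well-poised 4F3: expand the
  well-poised ratio (a)_n (b)_n (c)_n / (n! (1+a-b)_n (1+a-c)_n) as a finite sum by the
  Pfaff-Saalschuetz theorem, interchange the two summations and evaluate the inner sum by
  Chu-Vandermonde.

  In general Q_k(n) = sum_j e_j phi_j(n) with phi_j(n) = (-n)_j (n+a)_j / (j! (b)_j (c)_j), and the
  contribution of phi_j is the k = 0 identity for the shifted parameters (a+2j, b+j, c+j, w+j, m-j).
  On the hypergeometric side the same coefficients e_j appear when the extra upper parameters are
  expanded as sum_j C(l,j) e_j (1+a-b-c)_(l-j): by Chu-Vandermonde for (1-k+a-b-c)_l in (i), and by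
  Pfaff-Saalschuetz for (1-k+a-b-c)_l (k+d)_l / (d)_l in (ii).  The pairs of parameters a/2, 1/2+a/2
  and 1/2+(a-w-m)/2, 1+(a-w-m)/2 merge by the duplication formula into (a)_(2l) and (1+a-w-m)_(2l).
*)

lemma pochhammer_shift_nonzero:
  fixes z :: "'a :: field_char_0"
  assumes "z \<notin> \<int>\<^sub>\<le>\<^sub>0"
  shows "pochhammer (z + of_nat j) n \<noteq> 0"
proof
  assume "pochhammer (z + of_nat j) n = 0"
  then obtain k where "z + of_nat j + of_nat k = 0"
    by (auto simp: pochhammer_eq_0_iff eq_neg_iff_add_eq_0)
  then have "z + of_nat (j + k) = 0" by (simp add: add.assoc)
  with assms show False using plus_of_nat_eq_0_imp by blast
qed

lemma pochhammer_nonzero: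
  fixes z :: "'a :: field_char_0"
  shows "z \<notin> \<int>\<^sub>\<le>\<^sub>0 \<Longrightarrow> pochhammer z n \<noteq> 0"
  using pochhammer_shift_nonzero[of z 0] by simp

lemma add_of_nat_notin_nonpos_Ints:
  fixes z :: "'a :: ring_1"
  assumes "z \<notin> \<int>\<^sub>\<le>\<^sub>0"
  shows "z + of_nat j \<notin> \<int>\<^sub>\<le>\<^sub>0"
  using nonpos_Ints_diff_Nats[of "z + of_nat j" "of_nat j"] assms by auto

definition saalschuetz_term :: "'a :: field_char_0 \<Rightarrow> 'a \<Rightarrow> 'a \<Rightarrow> nat \<Rightarrow> nat \<Rightarrow> 'a" where
  "saalschuetz_term A B C n j = of_nat (n choose j) * pochhammer A j * pochhammer B j
     * pochhammer (C + of_nat j) (n - j) * pochhammer (C - A - B) (n - j)"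

lemma saalschuetz_term_Suc_n:
  assumes "j \<le> n"
  shows "of_nat (Suc n - j) * saalschuetz_term A B C (Suc n) j
       = of_nat (Suc n) * (C + of_nat n) * (C - A - B + of_nat (n - j)) * saalschuetz_term A B C n j"
proof -
  have "(Suc n - j) * (Suc n choose j) = Suc n * (n choose j)"
    using binomial_absorb_comp[of "Suc n" j] by simp
  then have "of_nat (Suc n - j) * of_nat (Suc n choose j) = (of_nat (Suc n) * of_nat (n choose j) :: 'a)"
    by (metis of_nat_mult)
  moreover have "Suc n - j = Suc (n - j)" using assms by simp
  moreover have "C + of_nat j + of_nat (n - j) = C + of_nat n" using assms by (simp flip: of_nat_add)
  ultimately show ?thesis
    unfolding saalschuetz_term_def by (simp add: pochhammer_Suc)
qed

lemma saalschuetz_term_Suc_j: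
  assumes "j \<le> n"
  shows "of_nat (Suc j) * (C + of_nat j) * saalschuetz_term A B C (Suc n) (Suc j)
       = of_nat (Suc n) * (A + of_nat j) * (B + of_nat j) * (C + of_nat n) * saalschuetz_term A B C n j"
proof -
  have "Suc n * (n choose j) = (Suc n choose Suc j) * Suc j" by (rule Suc_times_binomial_eq)
  then have binom: "of_nat (Suc j) * of_nat (Suc n choose Suc j) = (of_nat (Suc n) * of_nat (n choose j) :: 'a)"
    by (metis mult.commute of_nat_mult)
  have rising: "(C + of_nat j) * pochhammer (C + of_nat (Suc j)) (n - j)
      = pochhammer (C + of_nat j) (n - j) * (C + of_nat n)"
    using pochhammer_rec[of "C + of_nat j" "n - j"] pochhammer_Suc[of "C + of_nat j" "n - j"] assms
    by (simp add: ac_simps flip: of_nat_add)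
  have "of_nat (Suc j) * (C + of_nat j) * saalschuetz_term A B C (Suc n) (Suc j)
      = (of_nat (Suc j) * of_nat (Suc n choose Suc j)) * ((C + of_nat j) * pochhammer (C + of_nat (Suc j)) (n - j))
        * (pochhammer A j * (A + of_nat j) * pochhammer B j * (B + of_nat j) * pochhammer (C - A - B) (n - j))"
    unfolding saalschuetz_term_def by (simp del: binomial_Suc_Suc add: pochhammer_Suc ac_simps)
  also have "\<dots> = of_nat (Suc n) * (A + of_nat j) * (B + of_nat j) * (C + of_nat n) * saalschuetz_term A B C n j"
    unfolding binom rising saalschuetz_term_def by (simp add: ac_simps)
  finally show ?thesis .
qed

lemma saalschuetz_term_telescoping:
  fixes A B C :: "'a :: field_char_0"
  assumes C: "C \<notin> \<int>\<^sub>\<le>\<^sub>0" and "j \<le> n"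
  \<comment> \<open>G is the Wilf-Zeilberger certificate of the Pfaff-Saalschuetz sum.\<close>
  defines "G \<equiv> \<lambda>j. saalschuetz_term A B C (Suc n) j * of_nat j * (1 - C - of_nat j)
                    / (of_nat (Suc n) * (C + of_nat n))"
  shows "saalschuetz_term A B C (Suc n) j - (C - A + of_nat n) * (C - B + of_nat n) * saalschuetz_term A B C n j
       = G (Suc j) - G j"
proof -
  obtain m where n: "n = j + m" using \<open>j \<le> n\<close> le_Suc_ex by blast
  define X where "X = saalschuetz_term A B C n j"
  have Cj: "C + of_nat j \<noteq> 0" and Cn: "C + of_nat n \<noteq> 0"
    using C plus_of_nat_eq_0_imp by blast+
  have j1: "1 + of_nat j \<noteq> (0 :: 'a)" and m1: "1 + of_nat m \<noteq> (0 :: 'a)"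
    and n1: "1 + of_nat n \<noteq> (0 :: 'a)"
    by (metis of_nat_Suc of_nat_neq_0)+
  have "of_nat (Suc m) * saalschuetz_term A B C (Suc n) j
      = of_nat (Suc n) * (C + of_nat n) * (C - A - B + of_nat m) * X"
    using saalschuetz_term_Suc_n[of j n A B C] n unfolding X_def by simp
  then have left: "saalschuetz_term A B C (Suc n) j
      = (1 + of_nat n) * (C + of_nat n) * (C - A - B + of_nat m) * X / (1 + of_nat m)"
    using m1 by (simp add: divide_simps ac_simps)
  have right: "saalschuetz_term A B C (Suc n) (Suc j)
      = (1 + of_nat n) * (A + of_nat j) * (B + of_nat j) * (C + of_nat n) * X / ((1 + of_nat j) * (C + of_nat j))"
    using saalschuetz_term_Suc_j[OF \<open>j \<le> n\<close>, of C A B] Cj j1 unfolding X_def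
    by (simp add: divide_simps ac_simps)
  have G_Suc: "G (Suc j) = - X * (A + of_nat j) * (B + of_nat j)"
    unfolding G_def right using Cj Cn j1 n1 by (simp add: divide_simps) (simp add: algebra_simps)
  have G_j: "G j = X * (C - A - B + of_nat m) * of_nat j * (1 - C - of_nat j) / (1 + of_nat m)"
    unfolding G_def left using Cn n1 m1 by (simp add: divide_simps)
  have lhs: "saalschuetz_term A B C (Suc n) j - (C - A + of_nat n) * (C - B + of_nat n) * X
      = X * ((1 + of_nat n) * (C + of_nat n) * (C - A - B + of_nat m)
             - (1 + of_nat m) * (C - A + of_nat n) * (C - B + of_nat n)) / (1 + of_nat m)"
    unfolding left using m1 by (simp add: divide_simps) (simp add: algebra_simps)
  have poly: "(1 + of_nat n) * (C + of_nat n) * (C - A - B + of_nat m)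
      - (1 + of_nat m) * (C - A + of_nat n) * (C - B + of_nat n)
      = - (1 + of_nat m) * (A + of_nat j) * (B + of_nat j) - (C - A - B + of_nat m) * of_nat j * (1 - C - of_nat j)"
    unfolding n of_nat_add by algebra
  show ?thesis
    unfolding X_def[symmetric] lhs poly G_Suc G_j using m1 by (simp add: divide_simps) (simp add: algebra_simps)
qed

theorem pfaff_saalschuetz:
  fixes A B C :: "'a :: field_char_0"
  assumes C: "C \<notin> \<int>\<^sub>\<le>\<^sub>0"
  shows "(\<Sum>j=0..n. saalschuetz_term A B C n j) = pochhammer (C - A) n * pochhammer (C - B) n"
proof (induction n)
  case 0
  show ?case by (simp add: saalschuetz_term_def)
next
  case (Suc n)
  let ?F = "saalschuetz_term A B C"
  define G where "G j = ?F (Suc n) j * of_nat j * (1 - C - of_nat j) / (of_nat (Suc n) * (C + of_nat n))" for j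
  define r where "r = (C - A + of_nat n) * (C - B + of_nat n)"
  have Cn: "C + of_nat n \<noteq> 0" using C plus_of_nat_eq_0_imp by blast
  have vanish: "?F n (Suc n) = 0" "G (Suc (Suc n)) = 0"
    unfolding G_def saalschuetz_term_def by (simp_all add: binomial_eq_0 del: binomial_Suc_Suc)
  have top: "G (Suc n) = - ?F (Suc n) (Suc n)"
    unfolding G_def using Cn by (simp add: divide_simps del: of_nat_Suc) (simp add: algebra_simps)
  have step: "?F (Suc n) j - r * ?F n j = G (Suc j) - G j" if "j \<le> Suc n" for j
  proof (cases "j = Suc n")
    case True
    then show ?thesis using vanish top by simp
  next
    case False
    then show ?thesis
      using saalschuetz_term_telescoping[OF C, of j n A B] that unfolding G_def r_def by simp
  qed
  have "(\<Sum>j=0..Suc n. ?F (Suc n) j) - r * (\<Sum>j=0..n. ?F n j)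
      = (\<Sum>j=0..Suc n. ?F (Suc n) j - r * ?F n j)"
    using vanish by (simp add: sum_subtractf sum_distrib_left)
  also have "\<dots> = (\<Sum>j=0..Suc n. G (Suc j) - G j)"
    using step by (intro sum.cong) auto
  also have "\<dots> = G (Suc (Suc n)) - G 0"
    by (rule sum_Suc_diff) simp
  also have "\<dots> = 0"
    using vanish by (simp add: G_def)
  finally show ?case
    using Suc.IH unfolding r_def by (simp add: pochhammer_Suc mult_ac)
qed

lemma pochhammer_add_right: "pochhammer z (i + j) = pochhammer z j * pochhammer (z + of_nat j) i"
  using pochhammer_product'[of z j i] by (simp add: add.commute)

lemma sum_triangle_swap:
  fixes f :: "nat \<Rightarrow> nat \<Rightarrow> 'a :: comm_monoid_add"
  shows "(\<Sum>n=0..m. \<Sum>i=0..n. f n i) = (\<Sum>i=0..m. \<Sum>n=i..m. f n i)"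
proof (induction m)
  case (Suc m)
  have "(\<Sum>i=0..m. \<Sum>n=i..Suc m. f n i) = (\<Sum>i=0..m. (\<Sum>n=i..m. f n i) + f (Suc m) i)"
    by (intro sum.cong) auto
  with Suc show ?case by (simp add: sum.distrib)
qed simp

lemma pochhammer_reflect_split:
  fixes x :: "'a :: comm_ring_1"
  assumes "i \<le> m"
  shows "(-1) ^ i * pochhammer (x - of_nat i) (m - i) * pochhammer (1 - x - of_nat m) (2 * i)
       = pochhammer (1 - x) i * pochhammer x m"
proof -
  have "pochhammer (1 - x) i = (-1) ^ i * pochhammer (x - of_nat i) i"
    using pochhammer_minus[of "x - 1" i] by (simp add: algebra_simps)
  moreover have "pochhammer (1 - x - of_nat m) (2 * i) = pochhammer (x - of_nat i + of_nat (m - i)) (2 * i)"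
  proof -
    have negate: "1 - x - of_nat m = - (x + of_nat m - 1)" by simp
    have shift: "x + of_nat m - 1 - of_nat (2 * i) + 1 = x - of_nat i + of_nat (m - i)"
      using assms by (simp add: of_nat_diff algebra_simps)
    show ?thesis
      unfolding negate pochhammer_minus shift by (simp add: power_mult)
  qed
  moreover have "pochhammer (x - of_nat i) (m - i) * pochhammer (x - of_nat i + of_nat (m - i)) (2 * i)
      = pochhammer (x - of_nat i) i * pochhammer x m"
  proof -
    have "m - i + 2 * i = i + m" using assms by simp
    then show ?thesis
      using pochhammer_product'[of "x - of_nat i" "m - i" "2 * i"] pochhammer_product'[of "x - of_nat i" i m]
      by simp
  qed
  ultimately show ?thesis by (simp add: mult_ac)
qed

lemma well_poised_ratio_expansion:
  fixes a b c :: "'a :: field_char_0"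
  assumes hb: "1 + a - b \<notin> \<int>\<^sub>\<le>\<^sub>0" and hc: "1 + a - c \<notin> \<int>\<^sub>\<le>\<^sub>0"
  shows "pochhammer a n * pochhammer b n * pochhammer c n / (fact n * pochhammer (1+a-b) n * pochhammer (1+a-c) n)
       = (\<Sum>i=0..n. (-1) ^ i * pochhammer a (n + i) * pochhammer (1+a-b-c) i
            / (fact i * fact (n - i) * pochhammer (1+a-b) i * pochhammer (1+a-c) i))"
proof -
  define K where "K = pochhammer a n / (fact n * pochhammer (1+a-b) n * pochhammer (1+a-c) n)"
  have summand: "(-1) ^ i * pochhammer a (n + i) * pochhammer (1+a-b-c) i
            / (fact i * fact (n - i) * pochhammer (1+a-b) i * pochhammer (1+a-c) i)
      = K * (-1) ^ n * saalschuetz_term (a + of_nat n) (1+a-b-c) (1+a-b) n i"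
    if i: "i \<le> n" for i
  proof -
    have "(1+a-b) - (a + of_nat n) - (1+a-b-c) = - (a + of_nat n - c)" by simp
    moreover have "a + of_nat n - c - of_nat (n - i) + 1 = (1+a-c) + of_nat i"
      using i by (simp add: of_nat_diff)
    ultimately have flip: "pochhammer ((1+a-b) - (a + of_nat n) - (1+a-b-c)) (n - i)
        = (-1) ^ (n - i) * pochhammer ((1+a-c) + of_nat i) (n - i)"
      by (simp only: pochhammer_minus)
    have "(-1 :: 'a) ^ n = (-1) ^ i * (-1) ^ (n - i)" using i by (simp flip: power_add)
    moreover have "of_nat (n choose i) = (fact n / (fact i * fact (n - i)) :: 'a)"
      using i by (rule binomial_fact)
    moreover have "pochhammer a (n + i) = pochhammer a n * pochhammer (a + of_nat n) i"
      by (rule pochhammer_product')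
    moreover note pochhammer_product[OF i, of "1+a-b"] pochhammer_product[OF i, of "1+a-c"]
      pochhammer_shift_nonzero[OF hb] pochhammer_shift_nonzero[OF hc]
      pochhammer_nonzero[OF hb] pochhammer_nonzero[OF hc]
    ultimately show ?thesis
      unfolding K_def saalschuetz_term_def flip by (simp add: divide_simps) (simp add: mult_ac)
  qed
  have "(\<Sum>i=0..n. (-1) ^ i * pochhammer a (n + i) * pochhammer (1+a-b-c) i
            / (fact i * fact (n - i) * pochhammer (1+a-b) i * pochhammer (1+a-c) i))
      = K * (-1) ^ n * (\<Sum>i=0..n. saalschuetz_term (a + of_nat n) (1+a-b-c) (1+a-b) n i)"
    unfolding sum_distrib_left using summand by (intro sum.cong) auto
  also have "\<dots> = K * (-1) ^ n * (pochhammer (1 - b - of_nat n) n * pochhammer c n)"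
    using pfaff_saalschuetz[OF hb, of "a + of_nat n" "1+a-b-c" n] by (simp add: algebra_simps)
  also have "pochhammer (1 - b - of_nat n) n = (-1) ^ n * pochhammer b n"
    using pochhammer_minus[of "b + of_nat n - 1" n] by (simp add: algebra_simps)
  finally show ?thesis
    unfolding K_def by (simp flip: power_add add: mult_2[symmetric] power_mult)
qed

definition well_poised_term :: "'a :: field_char_0 \<Rightarrow> 'a \<Rightarrow> 'a \<Rightarrow> 'a \<Rightarrow> nat \<Rightarrow> nat \<Rightarrow> 'a" where
  "well_poised_term a b c w m n = pochhammer a n * pochhammer b n * pochhammer c n * pochhammer (- of_nat m) n
     / (fact n * pochhammer (1+a-b) n * pochhammer (1+a-c) n * pochhammer w n)"

definition quadratic_term :: "'a :: field_char_0 \<Rightarrow> 'a \<Rightarrow> 'a \<Rightarrow> 'a \<Rightarrow> nat \<Rightarrow> nat \<Rightarrow> 'a" where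
  "quadratic_term a b c w m l = pochhammer a (2 * l) * pochhammer (1+a-w) l * pochhammer (- of_nat m) l
     / (fact l * pochhammer (1+a-b) l * pochhammer (1+a-c) l * pochhammer (1+a-w-of_nat m) (2 * l))"

lemma vandermonde_shifted_sum:
  fixes a w :: "'a :: field_char_0"
  assumes hw: "w \<notin> \<int>\<^sub>\<le>\<^sub>0" and im: "i \<le> m"
  shows "(\<Sum>n=i..m. pochhammer a (n + i) * pochhammer (- of_nat m) n / (fact (n - i) * pochhammer w n))
       = pochhammer a (2 * i) * pochhammer (- of_nat m) i * pochhammer (w - a - of_nat i) (m - i) / pochhammer w m"
proof -
  note wnz = pochhammer_shift_nonzero[OF hw] pochhammer_nonzero[OF hw]
  define K where "K = pochhammer a (2 * i) * pochhammer (- of_nat m) i / pochhammer w i"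
  have "pochhammer a (p + i + i) * pochhammer (- of_nat m) (p + i) / (fact (p + i - i) * pochhammer w (p + i))
      = K * (pochhammer (a + of_nat (2 * i)) p * pochhammer (- of_nat (m - i)) p / (of_nat (fact p) * pochhammer (w + of_nat i) p))"
    for p
  proof -
    have "p + i + i = 2 * i + p" by simp
    then have "pochhammer a (p + i + i) = pochhammer a (2 * i) * pochhammer (a + of_nat (2 * i)) p"
      by (simp only: pochhammer_product')
    moreover have "pochhammer (- of_nat m) (p + i) = pochhammer (- of_nat m) i * (pochhammer (- of_nat (m - i)) p :: 'a)"
    proof -
      have "- of_nat m + of_nat i = - (of_nat (m - i) :: 'a)"
        using im by (simp add: of_nat_diff)
      then show ?thesis
        using pochhammer_product'[of "- of_nat m :: 'a" i p] by (simp only: add.commute[of p i])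
    qed
    ultimately show ?thesis
      unfolding K_def of_nat_fact pochhammer_add_right[of w p i] using wnz by (simp add: divide_simps)
  qed
  then have "(\<Sum>n=i..m. pochhammer a (n + i) * pochhammer (- of_nat m) n / (fact (n - i) * pochhammer w n))
      = K * (\<Sum>p=0..m-i. pochhammer (a + of_nat (2 * i)) p * pochhammer (- of_nat (m - i)) p
            / (of_nat (fact p) * pochhammer (w + of_nat i) p))"
    using sum.shift_bounds_cl_nat_ivl[of "\<lambda>n. pochhammer a (n + i) * pochhammer (- of_nat m) n
        / (fact (n - i) * pochhammer w n)" 0 i "m - i"] im
    by (simp add: sum_distrib_left)
  also have "\<dots> = K * (pochhammer (w - a - of_nat i) (m - i) / pochhammer (w + of_nat i) (m - i))"
    using Vandermonde_pochhammer[of "m - i" "w + of_nat i" "a + of_nat (2 * i)"] wnz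
    by (simp add: pochhammer_eq_0_iff algebra_simps)
  also have "\<dots> = pochhammer a (2 * i) * pochhammer (- of_nat m) i * pochhammer (w - a - of_nat i) (m - i) / pochhammer w m"
    unfolding K_def using pochhammer_product[OF im, of w] wnz by (simp add: divide_simps)
  finally show ?thesis .
qed

lemma well_poised_4F3_expansion:
  fixes a b c w :: "'a :: field_char_0"
  assumes hb: "1 + a - b \<notin> \<int>\<^sub>\<le>\<^sub>0" and hc: "1 + a - c \<notin> \<int>\<^sub>\<le>\<^sub>0" and hw: "w \<notin> \<int>\<^sub>\<le>\<^sub>0"
  shows "pochhammer w m * (\<Sum>n=0..m. well_poised_term a b c w m n)
       = (\<Sum>i=0..m. (-1) ^ i * pochhammer a (2 * i) * pochhammer (1+a-b-c) i * pochhammer (- of_nat m) i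
            / (fact i * pochhammer (1+a-b) i * pochhammer (1+a-c) i) * pochhammer (w - a - of_nat i) (m - i))"
proof -
  define e where "e i = (-1) ^ i * pochhammer (1+a-b-c) i / (fact i * pochhammer (1+a-b) i * pochhammer (1+a-c) i)" for i
  define f where "f n i = pochhammer a (n + i) * pochhammer (- of_nat m) n / (fact (n - i) * pochhammer w n)" for n i
  have "(\<Sum>n=0..m. well_poised_term a b c w m n) = (\<Sum>n=0..m. \<Sum>i=0..n. e i * f n i)"
  proof (intro sum.cong refl)
    fix n
    have "well_poised_term a b c w m n
        = pochhammer a n * pochhammer b n * pochhammer c n / (fact n * pochhammer (1+a-b) n * pochhammer (1+a-c) n)
          * (pochhammer (- of_nat m) n / pochhammer w n)"
      unfolding well_poised_term_def by simp
    also have "\<dots> = (\<Sum>i=0..n. e i * f n i)"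
      unfolding well_poised_ratio_expansion[OF hb hc] sum_distrib_right e_def f_def
      by (intro sum.cong refl) (simp add: field_simps)
    finally show "well_poised_term a b c w m n = (\<Sum>i=0..n. e i * f n i)" .
  qed
  also have "\<dots> = (\<Sum>i=0..m. e i * (\<Sum>n=i..m. f n i))"
    unfolding sum_triangle_swap sum_distrib_left ..
  also have "\<dots> = (\<Sum>i=0..m. e i * (pochhammer a (2 * i) * pochhammer (- of_nat m) i
                   * pochhammer (w - a - of_nat i) (m - i) / pochhammer w m))"
    unfolding f_def using vandermonde_shifted_sum[OF hw] by (intro sum.cong) auto
  finally show ?thesis
    unfolding e_def using pochhammer_nonzero[OF hw] by (simp add: sum_distrib_left field_simps)
qed

lemma quadratic_transformation_base:
  fixes a b c w :: "'a :: field_char_0"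
  assumes hb: "1 + a - b \<notin> \<int>\<^sub>\<le>\<^sub>0" and hc: "1 + a - c \<notin> \<int>\<^sub>\<le>\<^sub>0" and hw: "w \<notin> \<int>\<^sub>\<le>\<^sub>0"
    and hq: "pochhammer (1 + a - w - of_nat m) (2 * m) \<noteq> 0"
  shows "pochhammer (w - a) m * (\<Sum>l=0..m. pochhammer (1+a-b-c) l * quadratic_term a b c w m l)
       = pochhammer w m * (\<Sum>n=0..m. well_poised_term a b c w m n)"
proof -
  have "pochhammer (w - a) m * (pochhammer (1+a-b-c) l * quadratic_term a b c w m l)
      = (-1) ^ l * pochhammer a (2 * l) * pochhammer (1+a-b-c) l * pochhammer (- of_nat m) l
          / (fact l * pochhammer (1+a-b) l * pochhammer (1+a-c) l) * pochhammer (w - a - of_nat l) (m - l)"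
    if l: "l \<le> m" for l
  proof -
    have "pochhammer (1 + a - w - of_nat m) (2 * l) \<noteq> 0"
      using pochhammer_neq_0_mono[OF hq] l by simp
    moreover have "(-1) ^ l * pochhammer (w - a - of_nat l) (m - l) * pochhammer (1 + a - w - of_nat m) (2 * l)
        = pochhammer (1 + a - w) l * pochhammer (w - a) m"
      using pochhammer_reflect_split[OF l, of "w - a"] by (simp add: algebra_simps)
    ultimately show ?thesis
      unfolding quadratic_term_def by (simp add: divide_simps) (simp add: ac_simps)
  qed
  then have "pochhammer (w - a) m * (\<Sum>l=0..m. pochhammer (1+a-b-c) l * quadratic_term a b c w m l)
      = (\<Sum>l=0..m. (-1) ^ l * pochhammer a (2 * l) * pochhammer (1+a-b-c) l * pochhammer (- of_nat m) l
          / (fact l * pochhammer (1+a-b) l * pochhammer (1+a-c) l) * pochhammer (w - a - of_nat l) (m - l))"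
    unfolding sum_distrib_left by (intro sum.cong) auto
  then show ?thesis
    unfolding well_poised_4F3_expansion[OF hb hc hw, symmetric] .
qed

lemma quadratic_term_shift:
  fixes a b c w :: "'a :: field_char_0"
  assumes hb: "1 + a - b \<notin> \<int>\<^sub>\<le>\<^sub>0" and hc: "1 + a - c \<notin> \<int>\<^sub>\<le>\<^sub>0"
    and hq: "pochhammer (1 + a - w - of_nat m) (2 * (i + j)) \<noteq> 0" and "j \<le> m"
  shows "of_nat ((i + j) choose j) * quadratic_term a b c w m (i + j)
       = quadratic_term a b c w m j
         * quadratic_term (a + of_nat (2 * j)) (b + of_nat j) (c + of_nat j) (w + of_nat j) (m - j) i"
proof -
  have double_split: "pochhammer z (2 * (i + j)) = pochhammer z (2 * j) * pochhammer (z + of_nat (2 * j)) (2 * i)" for z :: 'a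
    using pochhammer_product'[of z "2 * j" "2 * i"] by (simp add: algebra_simps)
  have params:
    "- of_nat (m - j) = - of_nat m + (of_nat j :: 'a)"
    "1 + (a + of_nat (2 * j)) - (w + of_nat j) - of_nat (m - j) = 1 + a - w - of_nat m + of_nat (2 * j)"
    "1 + (a + of_nat (2 * j)) - (w + of_nat j) = 1 + a - w + of_nat j"
    "1 + (a + of_nat (2 * j)) - (b + of_nat j) = 1 + a - b + of_nat j"
    "1 + (a + of_nat (2 * j)) - (c + of_nat j) = 1 + a - c + of_nat j"
    using \<open>j \<le> m\<close> by (simp_all add: of_nat_diff)
  have "of_nat ((i + j) choose j) = (fact (i + j) / (fact j * fact i) :: 'a)"
    using binomial_fact[of j "i + j"] by simp
  moreover have "pochhammer (1 + a - w - of_nat m) (2 * j) \<noteq> 0"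
    and "pochhammer (1 + a - w - of_nat m + of_nat (2 * j)) (2 * i) \<noteq> 0"
    using hq unfolding double_split by auto
  moreover note pochhammer_shift_nonzero[OF hb] pochhammer_shift_nonzero[OF hc]
    pochhammer_nonzero[OF hb] pochhammer_nonzero[OF hc]
  ultimately show ?thesis
    unfolding quadratic_term_def params(2) unfolding params(1,3-5) pochhammer_add_right double_split by (simp add: divide_simps)
qed

definition Q2_basis :: "nat \<Rightarrow> 'a :: field_char_0 \<Rightarrow> 'a \<Rightarrow> 'a \<Rightarrow> nat \<Rightarrow> 'a" where
  "Q2_basis j a b c n = pochhammer (- of_nat n) j * pochhammer (of_nat n + a) j / (fact j * pochhammer b j * pochhammer c j)"

lemma well_poised_term_shift:
  fixes a b c w :: "'a :: field_char_0"
  assumes hb: "1 + a - b \<notin> \<int>\<^sub>\<le>\<^sub>0" and hc: "1 + a - c \<notin> \<int>\<^sub>\<le>\<^sub>0"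
    and hB: "b \<notin> \<int>\<^sub>\<le>\<^sub>0" and hC: "c \<notin> \<int>\<^sub>\<le>\<^sub>0" and hw: "w \<notin> \<int>\<^sub>\<le>\<^sub>0" and "j \<le> m"
  shows "well_poised_term a b c w m (i + j) * Q2_basis j a b c (i + j)
       = (-1) ^ j * pochhammer a (2 * j) * pochhammer (- of_nat m) j
           / (fact j * pochhammer (1+a-b) j * pochhammer (1+a-c) j * pochhammer w j)
         * well_poised_term (a + of_nat (2 * j)) (b + of_nat j) (c + of_nat j) (w + of_nat j) (m - j) i"
proof -
  have params:
    "- of_nat (m - j) = - of_nat m + (of_nat j :: 'a)"
    "1 + (a + of_nat (2 * j)) - (b + of_nat j) = 1 + a - b + of_nat j"
    "1 + (a + of_nat (2 * j)) - (c + of_nat j) = 1 + a - c + of_nat j"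
    using \<open>j \<le> m\<close> by (simp_all add: of_nat_diff)
  have rising: "pochhammer a (i + j) * pochhammer (of_nat (i + j) + a) j
      = pochhammer a (2 * j) * pochhammer (a + of_nat (2 * j)) i"
  proof -
    have "i + j + j = 2 * j + i" by simp
    then show ?thesis
      using pochhammer_product'[of a "i + j" j] pochhammer_product'[of a "2 * j" i]
      by (simp only: add.commute[of "of_nat (i + j)" a])
  qed
  have falling: "pochhammer (- of_nat (i + j)) j / fact (i + j) = (-1) ^ j / (fact i :: 'a)"
  proof -
    have "fact (i + j) = fact i * (pochhammer (of_nat i + 1) j :: 'a)"
      using pochhammer_product'[of "1::'a" i j] by (simp add: pochhammer_fact add.commute)
    moreover from this have "pochhammer (of_nat i + 1) j \<noteq> (0 :: 'a)"
      by (metis fact_nonzero mult_zero_right)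
    ultimately show ?thesis
      using pochhammer_minus[of "of_nat (i + j) :: 'a" j] by simp
  qed
  note nonzero = pochhammer_shift_nonzero[OF hb] pochhammer_shift_nonzero[OF hc]
    pochhammer_shift_nonzero[OF hw] pochhammer_nonzero[OF hb] pochhammer_nonzero[OF hc]
    pochhammer_nonzero[OF hw] pochhammer_nonzero[OF hB] pochhammer_nonzero[OF hC]
  have "well_poised_term a b c w m (i + j) * Q2_basis j a b c (i + j)
      = (pochhammer a (i + j) * pochhammer (of_nat (i + j) + a) j) * (pochhammer (- of_nat (i + j)) j / fact (i + j))
        * (pochhammer b (i + j) / pochhammer b j) * (pochhammer c (i + j) / pochhammer c j) * pochhammer (- of_nat m) (i + j)
        / (fact j * pochhammer (1+a-b) (i + j) * pochhammer (1+a-c) (i + j) * pochhammer w (i + j))"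
    unfolding well_poised_term_def Q2_basis_def using nonzero by (simp add: divide_simps ac_simps)
  also have "\<dots> = (-1) ^ j * pochhammer a (2 * j) * pochhammer (- of_nat m) j
           / (fact j * pochhammer (1+a-b) j * pochhammer (1+a-c) j * pochhammer w j)
         * well_poised_term (a + of_nat (2 * j)) (b + of_nat j) (c + of_nat j) (w + of_nat j) (m - j) i"
    unfolding rising falling unfolding well_poised_term_def params pochhammer_add_right using nonzero by (simp add: divide_simps ac_simps)
  finally show ?thesis .
qed

lemma sum_shift_vanishing_prefix:
  fixes f :: "nat \<Rightarrow> 'a :: comm_monoid_add"
  assumes "\<And>l. l < j \<Longrightarrow> f l = 0" and "j \<le> m"
  shows "(\<Sum>l=0..m. f l) = (\<Sum>i=0..m-j. f (i + j))"
proof -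
  have "(\<Sum>l=0..m. f l) = (\<Sum>l=j..m. f l)"
    using assms(1) by (intro sum.mono_neutral_right) auto
  also have "\<dots> = (\<Sum>i=0..m-j. f (i + j))"
    using sum.shift_bounds_cl_nat_ivl[of f 0 j "m - j"] assms(2) by simp
  finally show ?thesis .
qed

lemma binomial_quadratic_sum_shift:
  fixes a b c w x :: "'a :: field_char_0"
  assumes hb: "1 + a - b \<notin> \<int>\<^sub>\<le>\<^sub>0" and hc: "1 + a - c \<notin> \<int>\<^sub>\<le>\<^sub>0"
    and hq: "pochhammer (1 + a - w - of_nat m) (2 * m) \<noteq> 0" and jm: "j \<le> m"
  shows "pochhammer (w - a) m * (\<Sum>l=0..m. of_nat (l choose j) * pochhammer x (l - j) * quadratic_term a b c w m l)
       = (-1) ^ j * pochhammer a (2 * j) * pochhammer (- of_nat m) j / (fact j * pochhammer (1+a-b) j * pochhammer (1+a-c) j)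
         * (pochhammer (w - a - of_nat j) (m - j)
            * (\<Sum>i=0..m-j. pochhammer x i
                 * quadratic_term (a + of_nat (2 * j)) (b + of_nat j) (c + of_nat j) (w + of_nat j) (m - j) i))"
proof -
  have "(\<Sum>l=0..m. of_nat (l choose j) * pochhammer x (l - j) * quadratic_term a b c w m l)
      = (\<Sum>i=0..m-j. pochhammer x i * (of_nat ((i + j) choose j) * quadratic_term a b c w m (i + j)))"
    by (subst sum_shift_vanishing_prefix[OF _ jm]) (simp_all add: binomial_eq_0 ac_simps)
  also have "\<dots> = quadratic_term a b c w m j * (\<Sum>i=0..m-j. pochhammer x i
                 * quadratic_term (a + of_nat (2 * j)) (b + of_nat j) (c + of_nat j) (w + of_nat j) (m - j) i)"
    unfolding sum_distrib_left
  proof (intro sum.cong refl)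
    fix i assume "i \<in> {0..m-j}"
    then have "pochhammer (1 + a - w - of_nat m) (2 * (i + j)) \<noteq> 0"
      using pochhammer_neq_0_mono[OF hq, of "2 * (i + j)"] jm by simp
    then show "pochhammer x i * (of_nat ((i + j) choose j) * quadratic_term a b c w m (i + j))
      = quadratic_term a b c w m j * (pochhammer x i
          * quadratic_term (a + of_nat (2 * j)) (b + of_nat j) (c + of_nat j) (w + of_nat j) (m - j) i)"
      using quadratic_term_shift[OF hb hc _ jm] by simp
  qed
  finally have sum_eq: "(\<Sum>l=0..m. of_nat (l choose j) * pochhammer x (l - j) * quadratic_term a b c w m l)
      = quadratic_term a b c w m j * (\<Sum>i=0..m-j. pochhammer x i
          * quadratic_term (a + of_nat (2 * j)) (b + of_nat j) (c + of_nat j) (w + of_nat j) (m - j) i)" .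
  have "pochhammer (1 + a - w - of_nat m) (2 * j) \<noteq> 0"
    using pochhammer_neq_0_mono[OF hq, of "2 * j"] jm by simp
  moreover have "(-1) ^ j * pochhammer (w - a - of_nat j) (m - j) * pochhammer (1 + a - w - of_nat m) (2 * j)
      = pochhammer (1 + a - w) j * pochhammer (w - a) m"
    using pochhammer_reflect_split[OF jm, of "w - a"] by (simp add: algebra_simps)
  ultimately show ?thesis
    unfolding sum_eq quadratic_term_def[of a b c w m j]
    using pochhammer_nonzero[OF hb] pochhammer_nonzero[OF hc] by (simp add: divide_simps) (simp add: ac_simps)
qed

lemma well_poised_Q2_basis_sum_shift:
  fixes a b c w :: "'a :: field_char_0"
  assumes hb: "1 + a - b \<notin> \<int>\<^sub>\<le>\<^sub>0" and hc: "1 + a - c \<notin> \<int>\<^sub>\<le>\<^sub>0"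
    and hB: "b \<notin> \<int>\<^sub>\<le>\<^sub>0" and hC: "c \<notin> \<int>\<^sub>\<le>\<^sub>0" and hw: "w \<notin> \<int>\<^sub>\<le>\<^sub>0" and jm: "j \<le> m"
  shows "pochhammer w m * (\<Sum>n=0..m. well_poised_term a b c w m n * Q2_basis j a b c n)
       = (-1) ^ j * pochhammer a (2 * j) * pochhammer (- of_nat m) j / (fact j * pochhammer (1+a-b) j * pochhammer (1+a-c) j)
         * (pochhammer (w + of_nat j) (m - j)
            * (\<Sum>i=0..m-j. well_poised_term (a + of_nat (2 * j)) (b + of_nat j) (c + of_nat j) (w + of_nat j) (m - j) i))"
proof -
  have "(\<Sum>n=0..m. well_poised_term a b c w m n * Q2_basis j a b c n)
      = (\<Sum>i=0..m-j. well_poised_term a b c w m (i + j) * Q2_basis j a b c (i + j))"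
    by (rule sum_shift_vanishing_prefix[OF _ jm]) (simp add: Q2_basis_def pochhammer_of_nat_eq_0_lemma)
  also have "\<dots> = (-1) ^ j * pochhammer a (2 * j) * pochhammer (- of_nat m) j
           / (fact j * pochhammer (1+a-b) j * pochhammer (1+a-c) j * pochhammer w j)
         * (\<Sum>i=0..m-j. well_poised_term (a + of_nat (2 * j)) (b + of_nat j) (c + of_nat j) (w + of_nat j) (m - j) i)"
    unfolding sum_distrib_left using well_poised_term_shift[OF hb hc hB hC hw jm] by simp
  finally show ?thesis
    using pochhammer_product[OF jm, of w] pochhammer_nonzero[OF hw] pochhammer_shift_nonzero[OF hw]
      pochhammer_nonzero[OF hb] pochhammer_nonzero[OF hc]
    by (simp add: divide_simps) (simp add: ac_simps)
qed

lemma quadratic_transformation_Q2_basis: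
  fixes a b c w :: "'a :: field_char_0"
  assumes hb: "1 + a - b \<notin> \<int>\<^sub>\<le>\<^sub>0" and hc: "1 + a - c \<notin> \<int>\<^sub>\<le>\<^sub>0"
    and hB: "b \<notin> \<int>\<^sub>\<le>\<^sub>0" and hC: "c \<notin> \<int>\<^sub>\<le>\<^sub>0" and hw: "w \<notin> \<int>\<^sub>\<le>\<^sub>0"
    and hq: "pochhammer (1 + a - w - of_nat m) (2 * m) \<noteq> 0" and jm: "j \<le> m"
  shows "pochhammer (w - a) m * (\<Sum>l=0..m. of_nat (l choose j) * pochhammer (1+a-b-c) (l - j) * quadratic_term a b c w m l)
       = pochhammer w m * (\<Sum>n=0..m. well_poised_term a b c w m n * Q2_basis j a b c n)"
proof -
  define a' b' c' w' where "a' = a + of_nat (2 * j)" and "b' = b + of_nat j" and "c' = c + of_nat j" and "w' = w + of_nat j"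
  have params: "1 + a' - b' = 1 + a - b + of_nat j" "1 + a' - c' = 1 + a - c + of_nat j"
    "1 + a' - b' - c' = 1 + a - b - c" "w' - a' = w - a - of_nat j"
    "1 + a' - w' - of_nat (m - j) = 1 + a - w - of_nat m + of_nat (2 * j)"
    unfolding a'_def b'_def c'_def w'_def using jm by (simp_all add: of_nat_diff)
  have "pochhammer (w' - a') (m - j) * (\<Sum>i=0..m-j. pochhammer (1+a'-b'-c') i * quadratic_term a' b' c' w' (m - j) i)
      = pochhammer w' (m - j) * (\<Sum>i=0..m-j. well_poised_term a' b' c' w' (m - j) i)"
  proof (rule quadratic_transformation_base)
    show "1 + a' - b' \<notin> \<int>\<^sub>\<le>\<^sub>0" "1 + a' - c' \<notin> \<int>\<^sub>\<le>\<^sub>0" "w' \<notin> \<int>\<^sub>\<le>\<^sub>0"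
      unfolding params w'_def using hb hc hw by (simp_all add: add_of_nat_notin_nonpos_Ints)
    have "pochhammer (1 + a - w - of_nat m) (2 * m)
        = pochhammer (1 + a - w - of_nat m) (2 * j) * pochhammer (1 + a - w - of_nat m + of_nat (2 * j)) (2 * (m - j))"
      using pochhammer_product[of "2 * j" "2 * m" "1 + a - w - of_nat m"] jm by (simp add: diff_mult_distrib2)
    then show "pochhammer (1 + a' - w' - of_nat (m - j)) (2 * (m - j)) \<noteq> 0"
      unfolding params using hq by simp
  qed
  then have shifted_base: "pochhammer (w - a - of_nat j) (m - j)
        * (\<Sum>i=0..m-j. pochhammer (1+a-b-c) i
             * quadratic_term (a + of_nat (2 * j)) (b + of_nat j) (c + of_nat j) (w + of_nat j) (m - j) i)
      = pochhammer (w + of_nat j) (m - j)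
        * (\<Sum>i=0..m-j. well_poised_term (a + of_nat (2 * j)) (b + of_nat j) (c + of_nat j) (w + of_nat j) (m - j) i)"
    unfolding params(3,4) unfolding a'_def b'_def c'_def w'_def .
  show ?thesis
    unfolding binomial_quadratic_sum_shift[OF hb hc hq jm] well_poised_Q2_basis_sum_shift[OF hb hc hB hC hw jm]
      shifted_base ..
qed

lemma quadratic_transformation_combination:
  fixes a b c w :: "'a :: field_char_0" and e U Q :: "nat \<Rightarrow> 'a"
  assumes hb: "1 + a - b \<notin> \<int>\<^sub>\<le>\<^sub>0" and hc: "1 + a - c \<notin> \<int>\<^sub>\<le>\<^sub>0"
    and hB: "b \<notin> \<int>\<^sub>\<le>\<^sub>0" and hC: "c \<notin> \<int>\<^sub>\<le>\<^sub>0" and hw: "w \<notin> \<int>\<^sub>\<le>\<^sub>0" and hwa: "w - a \<notin> \<int>\<^sub>\<le>\<^sub>0"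
    and hq: "pochhammer (1 + a - w - of_nat m) (2 * m) \<noteq> 0"
    and U: "\<And>l. l \<le> m \<Longrightarrow> U l = (\<Sum>j=0..m. of_nat (l choose j) * e j * pochhammer (1+a-b-c) (l - j))"
    and Q: "\<And>n. n \<le> m \<Longrightarrow> Q n = (\<Sum>j=0..m. e j * Q2_basis j a b c n)"
  shows "(\<Sum>l=0..m. U l * quadratic_term a b c w m l)
       = pochhammer w m / pochhammer (w - a) m * (\<Sum>n=0..m. well_poised_term a b c w m n * Q n)"
proof -
  have "(\<Sum>l=0..m. U l * quadratic_term a b c w m l)
      = (\<Sum>l=0..m. \<Sum>j=0..m. e j * (of_nat (l choose j) * pochhammer (1+a-b-c) (l - j) * quadratic_term a b c w m l))"
    using U by (intro sum.cong) (simp_all add: sum_distrib_left sum_distrib_right ac_simps)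
  also have "\<dots> = (\<Sum>j=0..m. e j * (\<Sum>l=0..m. of_nat (l choose j) * pochhammer (1+a-b-c) (l - j) * quadratic_term a b c w m l))"
    by (subst sum.swap) (simp add: sum_distrib_left)
  finally have "pochhammer (w - a) m * (\<Sum>l=0..m. U l * quadratic_term a b c w m l)
      = (\<Sum>j=0..m. e j * (pochhammer (w - a) m
          * (\<Sum>l=0..m. of_nat (l choose j) * pochhammer (1+a-b-c) (l - j) * quadratic_term a b c w m l)))"
    by (simp add: sum_distrib_left ac_simps)
  also have "\<dots> = (\<Sum>j=0..m. e j * (pochhammer w m * (\<Sum>n=0..m. well_poised_term a b c w m n * Q2_basis j a b c n)))"
    using quadratic_transformation_Q2_basis[OF hb hc hB hC hw hq] by simp
  also have "\<dots> = pochhammer w m * (\<Sum>j=0..m. \<Sum>n=0..m. well_poised_term a b c w m n * (e j * Q2_basis j a b c n))"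
    by (simp add: sum_distrib_left ac_simps)
  also have "\<dots> = pochhammer w m * (\<Sum>n=0..m. \<Sum>j=0..m. well_poised_term a b c w m n * (e j * Q2_basis j a b c n))"
    by (subst sum.swap) (rule refl)
  also have "\<dots> = pochhammer w m * (\<Sum>n=0..m. well_poised_term a b c w m n * Q n)"
    using Q by (simp add: sum_distrib_left)
  finally show ?thesis
    using pochhammer_nonzero[OF hwa] by (simp add: field_simps)
qed

lemma sum_atLeastAtMost_truncate:
  fixes f :: "nat \<Rightarrow> 'a :: comm_monoid_add"
  assumes "\<And>j. p < j \<Longrightarrow> f j = 0" and "p \<le> A" and "p \<le> B"
  shows "(\<Sum>j=0..A. f j) = (\<Sum>j=0..B. f j)"
proof -
  have "(\<Sum>j=0..X. f j) = (\<Sum>j=0..p. f j)" if "p \<le> X" for X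
    using assms(1) that by (intro sum.mono_neutral_right) auto
  with assms(2,3) show ?thesis by metis
qed

lemma pochhammer_binomial_sum_upto:
  fixes x y :: "'a :: comm_ring_1"
  assumes "l \<le> m"
  shows "pochhammer (x + y) l = (\<Sum>j=0..m. of_nat (l choose j) * pochhammer x j * pochhammer y (l - j))"
  unfolding pochhammer_binomial_sum atMost_atLeast0
  using assms by (intro sum_atLeastAtMost_truncate[where p = l]) (simp_all add: binomial_eq_0)

lemma pfaff_saalschuetz_ratio:
  fixes A B C :: "'a :: field_char_0"
  assumes C: "C \<notin> \<int>\<^sub>\<le>\<^sub>0" and "l \<le> m"
  shows "pochhammer (C - A) l * pochhammer (C - B) l / pochhammer C l
       = (\<Sum>j=0..m. of_nat (l choose j) * (pochhammer A j * pochhammer B j / pochhammer C j) * pochhammer (C - A - B) (l - j))"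
proof -
  have "pochhammer (C - A) l * pochhammer (C - B) l / pochhammer C l
      = (\<Sum>j=0..l. saalschuetz_term A B C l j / pochhammer C l)"
    unfolding pfaff_saalschuetz[OF C, symmetric] sum_divide_distrib ..
  also have "\<dots> = (\<Sum>j=0..l. of_nat (l choose j) * (pochhammer A j * pochhammer B j / pochhammer C j) * pochhammer (C - A - B) (l - j))"
  proof (intro sum.cong refl)
    fix j assume "j \<in> {0..l}"
    then have "pochhammer C l = pochhammer C j * pochhammer (C + of_nat j) (l - j)"
      by (intro pochhammer_product) simp
    then show "saalschuetz_term A B C l j / pochhammer C l
        = of_nat (l choose j) * (pochhammer A j * pochhammer B j / pochhammer C j) * pochhammer (C - A - B) (l - j)"
      unfolding saalschuetz_term_def using pochhammer_shift_nonzero[OF C] pochhammer_nonzero[OF C]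
      by (simp add: divide_simps)
  qed
  also have "\<dots> = (\<Sum>j=0..m. of_nat (l choose j) * (pochhammer A j * pochhammer B j / pochhammer C j) * pochhammer (C - A - B) (l - j))"
    using \<open>l \<le> m\<close> by (intro sum_atLeastAtMost_truncate[where p = l]) (simp_all add: binomial_eq_0)
  finally show ?thesis .
qed

lemma pochhammer_double_half:
  fixes z :: "'a :: field_char_0"
  shows "pochhammer (1 + z) (2 * n) = of_nat (2 ^ (2 * n)) * pochhammer (1/2 + z/2) n * pochhammer (1 + z/2) n"
proof -
  have "2 * (1/2 + z/2) = 1 + z" and "1/2 + z/2 + 1/2 = 1 + z/2"
    by (simp_all add: field_simps)
  with pochhammer_double[of "1/2 + z/2" n] show ?thesis by (simp only:)
qed

lemma hypF_as_quadratic_sum: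
  fixes a b c w :: complex and us ls :: "complex list"
  assumes hb: "1 + a - b \<notin> \<int>\<^sub>\<le>\<^sub>0" and hc: "1 + a - c \<notin> \<int>\<^sub>\<le>\<^sub>0" and hls: "\<forall>z\<in>set ls. z \<notin> \<int>\<^sub>\<le>\<^sub>0"
    and h1: "1/2 + (a - w - of_nat m)/2 \<notin> \<int>\<^sub>\<le>\<^sub>0" and h2: "1 + (a - w - of_nat m)/2 \<notin> \<int>\<^sub>\<le>\<^sub>0"
  shows "hypF ([a/2, 1/2 + a/2] @ us @ [1 + a - w, - of_nat m])
              ([1 + a - b, 1 + a - c] @ ls @ [1/2 + (a - w - of_nat m)/2, 1 + (a - w - of_nat m)/2]) m
       = (\<Sum>l=0..m. (\<Prod>u\<leftarrow>us. pochhammer u l) / (\<Prod>z\<leftarrow>ls. pochhammer z l) * quadratic_term a b c w m l)"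
  unfolding hypF_def
proof (intro sum.cong refl)
  fix l
  have "pochhammer a (2 * l) = of_nat (2 ^ (2 * l)) * pochhammer (a/2) l * pochhammer (1/2 + a/2) l"
    using pochhammer_double[of "a/2" l] by (simp add: add.commute)
  moreover have "pochhammer (1 + a - w - of_nat m) (2 * l)
      = of_nat (2 ^ (2 * l)) * pochhammer (1/2 + (a - w - of_nat m)/2) l * pochhammer (1 + (a - w - of_nat m)/2) l"
    using pochhammer_double_half[of "a - w - of_nat m" l] by (simp add: add_diff_eq)
  moreover have "(\<Prod>z\<leftarrow>ls. pochhammer z l) \<noteq> 0"
    using hls by (auto simp: prod_list_zero_iff) (metis pochhammer_nonzero)
  moreover note pochhammer_nonzero[OF hb] pochhammer_nonzero[OF hc]
    pochhammer_nonzero[OF h1] pochhammer_nonzero[OF h2]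
  ultimately show "(\<Prod>u\<leftarrow>[a/2, 1/2 + a/2] @ us @ [1 + a - w, - of_nat m]. pochhammer u l)
      / ((\<Prod>z\<leftarrow>[1 + a - b, 1 + a - c] @ ls @ [1/2 + (a - w - of_nat m)/2, 1 + (a - w - of_nat m)/2]. pochhammer z l) * fact l)
      = (\<Prod>u\<leftarrow>us. pochhammer u l) / (\<Prod>z\<leftarrow>ls. pochhammer z l) * quadratic_term a b c w m l"
    unfolding quadratic_term_def by (simp add: divide_simps ac_simps)
qed

lemma Q2_as_basis_sum:
  assumes "n \<le> m"
  shows "Q2 k n a b c = (\<Sum>j=0..m. pochhammer (- of_nat k) j * Q2_basis j a b c n)"
proof -
  have "Q2 k n a b c = (\<Sum>j=0..k. pochhammer (- of_nat k) j * Q2_basis j a b c n)"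
    unfolding Q2_def Q2_basis_def by (simp add: ac_simps)
  also have "\<dots> = (\<Sum>j=0..m. pochhammer (- of_nat k) j * Q2_basis j a b c n)"
    using assms by (intro sum_atLeastAtMost_truncate[where p = "min n k"])
      (auto simp: Q2_basis_def pochhammer_of_nat_eq_0_lemma min_less_iff_disj)
  finally show ?thesis .
qed

lemma Q2d_as_basis_sum:
  assumes "n \<le> m"
  shows "Q2d k n a b c d = (\<Sum>j=0..m. pochhammer (- of_nat k) j * pochhammer (of_nat k - 1 - a + b + c + d) j
           / pochhammer d j * Q2_basis j a b c n)"
proof -
  have "Q2d k n a b c d = (\<Sum>j=0..k. pochhammer (- of_nat k) j * pochhammer (of_nat k - 1 - a + b + c + d) j
           / pochhammer d j * Q2_basis j a b c n)"
    unfolding Q2d_def Q2_basis_def by (simp add: ac_simps)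
  also have "\<dots> = (\<Sum>j=0..m. pochhammer (- of_nat k) j * pochhammer (of_nat k - 1 - a + b + c + d) j
           / pochhammer d j * Q2_basis j a b c n)"
    using assms by (intro sum_atLeastAtMost_truncate[where p = "min n k"])
      (auto simp: Q2_basis_def pochhammer_of_nat_eq_0_lemma min_less_iff_disj)
  finally show ?thesis .
qed

lemma double_lower_nonzero:
  fixes a w :: complex
  assumes "1/2 + (a - w - of_nat m)/2 \<notin> \<int>\<^sub>\<le>\<^sub>0" and "1 + (a - w - of_nat m)/2 \<notin> \<int>\<^sub>\<le>\<^sub>0"
  shows "pochhammer (1 + a - w - of_nat m) (2 * m) \<noteq> 0"
  using pochhammer_double_half[of "a - w - of_nat m" m] pochhammer_nonzero[OF assms(1)] pochhammer_nonzero[OF assms(2)]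
  by (simp add: add_diff_eq)

theorem terminating_5F4_transformation:
  fixes a b c w :: complex and k m :: nat
  assumes hb: "1 + a - b \<notin> \<int>\<^sub>\<le>\<^sub>0" and hc: "1 + a - c \<notin> \<int>\<^sub>\<le>\<^sub>0"
    and hB: "b \<notin> \<int>\<^sub>\<le>\<^sub>0" and hC: "c \<notin> \<int>\<^sub>\<le>\<^sub>0" and hw: "w \<notin> \<int>\<^sub>\<le>\<^sub>0" and hwa: "w - a \<notin> \<int>\<^sub>\<le>\<^sub>0"
    and h1: "1/2 + (a - w - of_nat m)/2 \<notin> \<int>\<^sub>\<le>\<^sub>0" and h2: "1 + (a - w - of_nat m)/2 \<notin> \<int>\<^sub>\<le>\<^sub>0"
  shows "hypF [a/2, 1/2 + a/2, 1 - of_nat k + a - b - c, 1 + a - w, - of_nat m]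
              [1 + a - b, 1 + a - c, 1/2 + (a - w - of_nat m)/2, 1 + (a - w - of_nat m)/2] m
       = pochhammer w m / pochhammer (w - a) m * (\<Sum>n=0..m. well_poised_term a b c w m n * Q2 k n a b c)"
proof -
  have "hypF [a/2, 1/2 + a/2, 1 - of_nat k + a - b - c, 1 + a - w, - of_nat m]
              [1 + a - b, 1 + a - c, 1/2 + (a - w - of_nat m)/2, 1 + (a - w - of_nat m)/2] m
      = (\<Sum>l=0..m. pochhammer (1 - of_nat k + a - b - c) l * quadratic_term a b c w m l)"
    using hypF_as_quadratic_sum[OF hb hc _ h1 h2, of "[]" "[1 - of_nat k + a - b - c]"] by simp
  also have "\<dots> = pochhammer w m / pochhammer (w - a) m * (\<Sum>n=0..m. well_poised_term a b c w m n * Q2 k n a b c)"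
    using hb hc hB hC hw hwa double_lower_nonzero[OF h1 h2]
  proof (rule quadratic_transformation_combination)
    have shift: "1 - of_nat k + a - b - c = - of_nat k + (1 + a - b - c)" by simp
    show "pochhammer (1 - of_nat k + a - b - c) l
        = (\<Sum>j=0..m. of_nat (l choose j) * pochhammer (- of_nat k) j * pochhammer (1+a-b-c) (l - j))"
      if "l \<le> m" for l
      unfolding shift by (rule pochhammer_binomial_sum_upto[OF that])
  qed (rule Q2_as_basis_sum)
  finally show ?thesis .
qed

theorem terminating_6F5_transformation:
  fixes a b c d w :: complex and k m :: nat
  assumes hb: "1 + a - b \<notin> \<int>\<^sub>\<le>\<^sub>0" and hc: "1 + a - c \<notin> \<int>\<^sub>\<le>\<^sub>0"
    and hB: "b \<notin> \<int>\<^sub>\<le>\<^sub>0" and hC: "c \<notin> \<int>\<^sub>\<le>\<^sub>0" and hw: "w \<notin> \<int>\<^sub>\<le>\<^sub>0" and hwa: "w - a \<notin> \<int>\<^sub>\<le>\<^sub>0"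
    and h1: "1/2 + (a - w - of_nat m)/2 \<notin> \<int>\<^sub>\<le>\<^sub>0" and h2: "1 + (a - w - of_nat m)/2 \<notin> \<int>\<^sub>\<le>\<^sub>0"
    and hd: "d \<notin> \<int>\<^sub>\<le>\<^sub>0"
  shows "hypF [a/2, 1/2 + a/2, 1 - of_nat k + a - b - c, of_nat k + d, 1 + a - w, - of_nat m]
              [1 + a - b, 1 + a - c, d, 1/2 + (a - w - of_nat m)/2, 1 + (a - w - of_nat m)/2] m
       = pochhammer w m / pochhammer (w - a) m * (\<Sum>n=0..m. well_poised_term a b c w m n * Q2d k n a b c d)"
proof -
  define e where "e j = pochhammer (- of_nat k) j * pochhammer (of_nat k - 1 - a + b + c + d) j / pochhammer d j" for j
  have "hypF [a/2, 1/2 + a/2, 1 - of_nat k + a - b - c, of_nat k + d, 1 + a - w, - of_nat m]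
              [1 + a - b, 1 + a - c, d, 1/2 + (a - w - of_nat m)/2, 1 + (a - w - of_nat m)/2] m
      = (\<Sum>l=0..m. pochhammer (d - (- of_nat k)) l * pochhammer (d - (of_nat k - 1 - a + b + c + d)) l / pochhammer d l
                    * quadratic_term a b c w m l)"
    using hypF_as_quadratic_sum[OF hb hc _ h1 h2, of "[d]" "[1 - of_nat k + a - b - c, of_nat k + d]"] hd
    by (simp add: algebra_simps)
  also have "\<dots> = pochhammer w m / pochhammer (w - a) m * (\<Sum>n=0..m. well_poised_term a b c w m n * Q2d k n a b c d)"
    using hb hc hB hC hw hwa double_lower_nonzero[OF h1 h2]
  proof (rule quadratic_transformation_combination[where e = e])
    show "pochhammer (d - (- of_nat k)) l * pochhammer (d - (of_nat k - 1 - a + b + c + d)) l / pochhammer d l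
        = (\<Sum>j=0..m. of_nat (l choose j) * e j * pochhammer (1+a-b-c) (l - j))" if "l \<le> m" for l
    proof -
      have "d - - of_nat k - (of_nat k - 1 - a + b + c + d) = 1 + a - b - c" by simp
      then show ?thesis unfolding pfaff_saalschuetz_ratio[OF hd that] e_def by (simp only: ac_simps times_divide_eq_right)
    qed
    show "Q2d k n a b c d = (\<Sum>j=0..m. e j * Q2_basis j a b c n)" if "n \<le> m" for n
      unfolding Q2d_as_basis_sum[OF that] e_def ..
  qed
  finally show ?thesis .
qed

theorem theorem11:
  fixes a b c d w :: complex and k m :: nat
  assumes "1 + a - b \<notin> \<int>\<^sub>\<le>\<^sub>0" and "1 + a - c \<notin> \<int>\<^sub>\<le>\<^sub>0"
    and "b \<notin> \<int>\<^sub>\<le>\<^sub>0" and "c \<notin> \<int>\<^sub>\<le>\<^sub>0"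
    and "w \<notin> \<int>\<^sub>\<le>\<^sub>0" and "w - a \<notin> \<int>\<^sub>\<le>\<^sub>0"
    and "1/2 + (a - w - of_nat m) / 2 \<notin> \<int>\<^sub>\<le>\<^sub>0"
    and "1 + (a - w - of_nat m) / 2 \<notin> \<int>\<^sub>\<le>\<^sub>0"
  shows "hypF [a/2, 1/2 + a/2, 1 - of_nat k + a - b - c, 1 + a - w, - of_nat m]
              [1 + a - b, 1 + a - c, 1/2 + (a - w - of_nat m)/2, 1 + (a - w - of_nat m)/2] m
         = pochhammer w m / pochhammer (w - a) m *
           (\<Sum>n=0..m. pochhammer a n * pochhammer b n * pochhammer c n * pochhammer (- of_nat m) n
              / (fact n * pochhammer (1 + a - b) n * pochhammer (1 + a - c) n * pochhammer w n)
              * Q2 k n a b c)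
       \<and> (d \<notin> \<int>\<^sub>\<le>\<^sub>0 \<longrightarrow>
         hypF [a/2, 1/2 + a/2, 1 - of_nat k + a - b - c, of_nat k + d, 1 + a - w, - of_nat m]
              [1 + a - b, 1 + a - c, d, 1/2 + (a - w - of_nat m)/2, 1 + (a - w - of_nat m)/2] m
         = pochhammer w m / pochhammer (w - a) m *
           (\<Sum>n=0..m. pochhammer a n * pochhammer b n * pochhammer c n * pochhammer (- of_nat m) n
              / (fact n * pochhammer (1 + a - b) n * pochhammer (1 + a - c) n * pochhammer w n)
              * Q2d k n a b c d))"
  using terminating_5F4_transformation[OF assms, of k] terminating_6F5_transformation[OF assms, of d k]
  unfolding well_poised_term_def by blast

end
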